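(* In the setting below, for every nonempty $A\subseteq[n]$: $\Pr_{\psi\sim\Psi}(E_1(\psi)\wedge E_2(\psi)\wedge E_3(\psi)\wedge\neg E_4(\psi))\le 2^{-6}$.
   Context: $[N]:=\{0,\dots,N-1\}$. Fix integers $n\ge1$ and real $0<\varepsilon<1$. Let $b:=2^{\lceil\log_2(9\cdot 2^{23}\varepsilon^{-2})\rceil}$ and $k:=\lceil\tfrac{15}{2}\ln b+16\rceil$. Hash families: for $d\ge1$, identify $[2^d]$ with $\mathrm{GF}(2^d)$ via binary representation. For $k'\ge1$, $N\le 2^d$, $c\le d$, $\mathcal H_{k'}([N],[2^c])$ is the uniform distribution over tuples $(a_0,\dots,a_{k'-1})\in\mathrm{GF}(2^d)^{k'}$, each giving $x\mapsto(\sum_ia_ix^i)\bmod 2^c$ on $[N]$; $\mathcal G_{k'}([N])$ is uniform over the same tuples giving $x\mapsto\mathrm{tz}(\sum_ia_ix^i)$, $\mathrm{tz}(y)$ = number of trailing zeros of the $d$-bit representation of $y$ ($\mathrm{tz}(0)=d$). Here $d$ is a fixed integer with $2^d\ge N$, $d\ge c$. $\Psi:=\mathcal G_2([n])\times\mathcal H_2([n],[2^5b^2])\times\mathcal H_k([2^5b^2],[b])$ with the uniform product distribution; $\psi=(f,g,h)$. For fixed nonempty $A\subseteq[n]$: $t(f):=\max_{a\in A}f(a)-\log_2b+9$; $s(f):=\max(0,t(f))$; $R(f):=\{a\in A: f(a)\ge s(f)\}$; $p(\psi):=|\{j\in[b]:\exists a\in A,\ h(g(a))=j,\ f(a)\ge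 s(f)\}|$; $\rho(x):=b(1-(1-b^{-1})^x)$. Events: $E_1(\psi)$: $2^{-16}b\le 2^{-t(f)}|A|\le 2^{-1}b$; $E_2(\psi)$: $\big||R(f)|-2^{-s(f)}|A|\big|\le\frac{\varepsilon}{3}2^{-s(f)}|A|$; $E_3(\psi)$: $g(a)\ne g(a')$ for all distinct $a,a'\in R(f)$; $E_4(\psi)$: $|p(\psi)-\rho(|R(f)|)|\le\frac{\varepsilon}{12}|R(f)|$. *)

theory Defs
  imports "HOL-Library.Z2" "HOL-Computational_Algebra.Polynomial_Factorial"
          "HOL-Probability.Probability"
begin

text \<open>A natural number x in [2^d] is identified with the polynomial over GF(2)
  (type bit) whose i-th coefficient is the i-th binary digit of x. GF(2^d) is
  realised as GF(2)[X]/(P) for an irreducible polynomial P of degree d (the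
  modulus P is a parameter: any such fixed choice).\<close>

definition nat_to_gf2poly :: "nat \<Rightarrow> bit poly" where
  "nat_to_gf2poly x = Poly (map (\<lambda>i. if Bit_Operations.bit x i then 1 else 0) [0..<Suc x])"

definition gf2poly_to_nat :: "bit poly \<Rightarrow> nat" where
  "gf2poly_to_nat q = (\<Sum>i\<le>degree q. if coeff q i = 1 then 2 ^ i else 0)"

definition gf_poly_eval :: "bit poly \<Rightarrow> nat list \<Rightarrow> nat \<Rightarrow> nat" where
  "gf_poly_eval P as x =
     gf2poly_to_nat ((\<Sum>i<length as. nat_to_gf2poly (as ! i) * nat_to_gf2poly x ^ i) mod P)"

definition gf_tuples :: "nat \<Rightarrow> nat \<Rightarrow> nat list set" where
  "gf_tuples d k' = {as. length as = k' \<and> set as \<subseteq> {0..<2 ^ d}}"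

definition tz :: "nat \<Rightarrow> nat \<Rightarrow> nat" where
  "tz d y = (if y = 0 then d else (LEAST i. Bit_Operations.bit y i))"

definition H_fam :: "bit poly \<Rightarrow> nat \<Rightarrow> nat \<Rightarrow> nat \<Rightarrow> (nat \<Rightarrow> nat) pmf" where
  "H_fam P d k' c = map_pmf (\<lambda>as x. gf_poly_eval P as x mod 2 ^ c) (pmf_of_set (gf_tuples d k'))"

definition G_fam :: "bit poly \<Rightarrow> nat \<Rightarrow> nat \<Rightarrow> (nat \<Rightarrow> nat) pmf" where
  "G_fam P d k' = map_pmf (\<lambda>as x. tz d (gf_poly_eval P as x)) (pmf_of_set (gf_tuples d k'))"

definition log_b :: "real \<Rightarrow> nat" where
  "log_b \<epsilon> = nat \<lceil>log 2 (9 * 2 ^ 23 / \<epsilon>\<^sup>2)\<rceil>"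

definition b_param :: "real \<Rightarrow> nat" where
  "b_param \<epsilon> = 2 ^ log_b \<epsilon>"

definition k_param :: "real \<Rightarrow> nat" where
  "k_param \<epsilon> = nat \<lceil>15 / 2 * ln (real (b_param \<epsilon>)) + 16\<rceil>"

definition t_val :: "real \<Rightarrow> nat set \<Rightarrow> (nat \<Rightarrow> nat) \<Rightarrow> int" where
  "t_val \<epsilon> A f = int (Max (f ` A)) - int (log_b \<epsilon>) + 9"

definition s_val :: "real \<Rightarrow> nat set \<Rightarrow> (nat \<Rightarrow> nat) \<Rightarrow> nat" where
  "s_val \<epsilon> A f = nat (max 0 (t_val \<epsilon> A f))"

definition R_set :: "real \<Rightarrow> nat set \<Rightarrow> (nat \<Rightarrow> nat) \<Rightarrow> nat set" where
  "R_set \<epsilon> A f = {a \<in> A. f a \<ge> s_val \<epsilon> A f}"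

definition p_val :: "real \<Rightarrow> nat set \<Rightarrow> (nat \<Rightarrow> nat) \<times> (nat \<Rightarrow> nat) \<times> (nat \<Rightarrow> nat) \<Rightarrow> nat" where
  "p_val \<epsilon> A \<psi> = (case \<psi> of (f, g, h) \<Rightarrow>
     card {j \<in> {0..<b_param \<epsilon>}. \<exists>a \<in> A. h (g a) = j \<and> f a \<ge> s_val \<epsilon> A f})"

definition rho :: "real \<Rightarrow> nat \<Rightarrow> real" where
  "rho \<epsilon> x = real (b_param \<epsilon>) * (1 - (1 - 1 / real (b_param \<epsilon>)) ^ x)"

definition E1 :: "real \<Rightarrow> nat set \<Rightarrow> (nat \<Rightarrow> nat) \<times> (nat \<Rightarrow> nat) \<times> (nat \<Rightarrow> nat) \<Rightarrow> bool" where
  "E1 \<epsilon> A \<psi> = (case \<psi> of (f, g, h) \<Rightarrow>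
     2 powr (-16) * real (b_param \<epsilon>) \<le> 2 powr (- real_of_int (t_val \<epsilon> A f)) * real (card A) \<and>
     2 powr (- real_of_int (t_val \<epsilon> A f)) * real (card A) \<le> 2 powr (-1) * real (b_param \<epsilon>))"

definition E2 :: "real \<Rightarrow> nat set \<Rightarrow> (nat \<Rightarrow> nat) \<times> (nat \<Rightarrow> nat) \<times> (nat \<Rightarrow> nat) \<Rightarrow> bool" where
  "E2 \<epsilon> A \<psi> = (case \<psi> of (f, g, h) \<Rightarrow>
     \<bar>real (card (R_set \<epsilon> A f)) - 2 powr (- real (s_val \<epsilon> A f)) * real (card A)\<bar>
       \<le> \<epsilon> / 3 * 2 powr (- real (s_val \<epsilon> A f)) * real (card A))"

definition E3 :: "real \<Rightarrow> nat set \<Rightarrow> (nat \<Rightarrow> nat) \<times> (nat \<Rightarrow> nat) \<times> (nat \<Rightarrow> nat) \<Rightarrow> bool" where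
  "E3 \<epsilon> A \<psi> = (case \<psi> of (f, g, h) \<Rightarrow>
     (\<forall>a \<in> R_set \<epsilon> A f. \<forall>a' \<in> R_set \<epsilon> A f. a \<noteq> a' \<longrightarrow> g a \<noteq> g a'))"

definition E4 :: "real \<Rightarrow> nat set \<Rightarrow> (nat \<Rightarrow> nat) \<times> (nat \<Rightarrow> nat) \<times> (nat \<Rightarrow> nat) \<Rightarrow> bool" where
  "E4 \<epsilon> A \<psi> = (case \<psi> of (f, g, h) \<Rightarrow>
     \<bar>real (p_val \<epsilon> A \<psi>) - rho \<epsilon> ((card (R_set \<epsilon> A f)))\<bar>
       \<le> \<epsilon> / 12 * real (card (R_set \<epsilon> A f)))"

end

theory Submission
  imports Defs
begin

text \<open>Once \<open>f\<close> and \<open>g\<close> are fixed, the events \<open>E1\<close>--\<open>E3\<close> no longer depend on \<open>h\<close>. When they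
  hold, \<open>g\<close> is injective on \<open>R(f)\<close> and \<open>m = |R(f)| \<le> b\<close>, so \<open>p(\<psi>)\<close> is \<open>b\<close> minus the number
  of empty bins when the \<open>m\<close> distinct keys \<open>g(R(f))\<close> are hashed into \<open>b\<close> bins by \<open>h\<close>, and
  \<open>\<rho>(m)\<close> is its expectation under a fully random hash. Polynomial hashing of
  degree \<open>< k\<close> over \<open>GF(2^d)\<close> is \<open>k\<close>-wise independent, because such a polynomial is determined by
  its values at \<open>k\<close> points. By Bonferroni's inequalities the first two moments of the number
  of empty bins then agree with the fully random ones up to an error of order
  \<open>m\<^sup>2 2\<^sup>k / (k! b)\<close>, which the choice of \<open>k\<close> (\<open>k! \<ge> 6 b\<^sup>2 2\<^sup>k\<close>) makes negligible, so the variance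
  is at most \<open>2m\<^sup>2/b\<close>. Chebyshev's inequality with deviation \<open>\<epsilon>m/12\<close> bounds the probability of
  \<open>\<not>E4\<close> by \<open>288/(\<epsilon>\<^sup>2 b) \<le> 2\<^sup>-\<^sup>6\<close>.\<close>

section \<open>Binary encoding of \<open>GF(2)[X]\<close>\<close>

lemma coeff_nat_to_gf2poly: "coeff (nat_to_gf2poly x) i = of_bool (Bit_Operations.bit x i)"
proof (cases "i < Suc x")
  case True
  then show ?thesis
    by (simp add: nat_to_gf2poly_def nth_default_def del: upt_Suc)
next
  case False
  have "x < 2 ^ x" by (rule less_exp)
  also have "\<dots> \<le> 2 ^ i" using False by simp
  finally have "\<not> Bit_Operations.bit x i" by (simp add: bit_iff_odd)
  with False show ?thesis by (simp add: nat_to_gf2poly_def nth_default_def)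
qed

lemma gf2poly_to_nat_eq_horner_sum:
  "gf2poly_to_nat q = horner_sum of_bool 2 (map (\<lambda>i. coeff q i = 1) [0..<Suc (degree q)])"
  unfolding gf2poly_to_nat_def horner_sum_eq_sum
  by (rule sum.cong) (auto simp del: upt_Suc)

lemma bit_gf2poly_to_nat: "Bit_Operations.bit (gf2poly_to_nat q) i \<longleftrightarrow> coeff q i = 1"
  by (auto simp: gf2poly_to_nat_eq_horner_sum bit_horner_sum_bit_iff le_degree less_Suc_eq_le
      simp del: upt_Suc)

lemma nat_to_gf2poly_gf2poly_to_nat [simp]: "nat_to_gf2poly (gf2poly_to_nat q) = q"
proof (rule poly_eqI)
  fix i
  show "coeff (nat_to_gf2poly (gf2poly_to_nat q)) i = coeff q i"
    unfolding coeff_nat_to_gf2poly bit_gf2poly_to_nat by (cases "coeff q i") auto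
qed

lemma gf2poly_to_nat_nat_to_gf2poly [simp]: "gf2poly_to_nat (nat_to_gf2poly x) = x"
  by (rule bit_eqI) (simp add: bit_gf2poly_to_nat coeff_nat_to_gf2poly)

lemma gf2poly_to_nat_less_power:
  assumes "degree q < N" shows "gf2poly_to_nat q < 2 ^ N"
proof -
  have "gf2poly_to_nat q = take_bit N (gf2poly_to_nat q)"
    using assms
    by (intro bit_eqI) (metis bit_gf2poly_to_nat bit_take_bit_iff le_degree order.strict_trans1 zero_neq_one)
  then show ?thesis by (metis take_bit_nat_less_exp)
qed

lemma degree_nat_to_gf2poly_less:
  assumes "x < 2 ^ d" "0 < d" shows "degree (nat_to_gf2poly x) < d"
proof -
  have "coeff (nat_to_gf2poly x) i = 0" if "d \<le> i" for i
  proof -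
    have "(2::nat) ^ d \<le> 2 ^ i" using that by simp
    then have "x < 2 ^ i" using assms(1) by linarith
    then show ?thesis by (simp add: coeff_nat_to_gf2poly bit_iff_odd)
  qed
  then have "degree (nat_to_gf2poly x) \<le> d - 1" using assms(2) by (intro degree_le) auto
  then show ?thesis using assms(2) by simp
qed

section \<open>Polynomial hashing over \<open>GF(2^d)\<close>\<close>

text \<open>Lagrange's bound on the number of roots, read in the quotient of \<open>'a\<close> by the prime \<open>p\<close>
  without forming that quotient.\<close>
lemma prime_dvd_coeff_if_dvd_poly_on_incongruent:
  fixes p :: "'a :: comm_ring_1" and Q :: "'a poly"
  assumes p: "prime_elem p" and "finite Z"
    and incongruent: "\<And>z z'. z \<in> Z \<Longrightarrow> z' \<in> Z \<Longrightarrow> z \<noteq> z' \<Longrightarrow> \<not> p dvd z - z'"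
    and "\<And>i. card Z \<le> i \<Longrightarrow> coeff Q i = 0"
    and "\<And>z. z \<in> Z \<Longrightarrow> p dvd poly Q z"
  shows "p dvd coeff Q i"
  using assms(2-)
proof (induction "card Z" arbitrary: Z Q i)
  case 0
  then have "Q = 0" by (intro poly_eqI) simp
  then show ?case by simp
next
  case (Suc k)
  then obtain z0 where z0: "z0 \<in> Z" by fastforce
  define E where "E = synthetic_div Q z0"
  have Q_eq: "Q = [:-z0, 1:] * E + [:poly Q z0:]"
    unfolding E_def by (rule synthetic_div_correct'[symmetric])
  have "degree Q \<le> k" using Suc.prems(3) Suc.hyps(2) by (intro degree_le) auto
  have E_small: "coeff E i = 0" if "card (Z - {z0}) \<le> i" for i
  proof (cases "degree Q = 0")
    case True
    then show ?thesis by (simp add: E_def synthetic_div_eq_0_iff[THEN iffD2])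
  next
    case False
    then show ?thesis
      using that \<open>degree Q \<le> k\<close> Suc.hyps(2) z0 Suc.prems(1)
      by (intro coeff_eq_0) (simp add: E_def degree_synthetic_div)
  qed
  have "p dvd poly E z" if z: "z \<in> Z - {z0}" for z
  proof -
    have "poly Q z = (z - z0) * poly E z + poly Q z0"
      by (subst Q_eq) (simp add: algebra_simps)
    then have "p dvd (z - z0) * poly E z"
      using Suc.prems(4) z z0 by (metis DiffD1 add_diff_cancel dvd_diff)
    moreover have "\<not> p dvd z - z0" using Suc.prems(2) z z0 by blast
    ultimately show ?thesis using p prime_elem_dvd_mult_iff by blast
  qed
  then have "p dvd coeff E j" for j
    using Suc.hyps(1)[of "Z - {z0}" E j] Suc.prems Suc.hyps(2) z0 E_small by simp
  moreover have "p dvd poly Q z0" using Suc.prems(4) z0 by blast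
  ultimately show ?case
    by (subst Q_eq) (cases i; auto simp: coeff_pCons intro!: dvd_add dvd_diff dvd_mult)
qed

definition gf_tuple_poly :: "nat list \<Rightarrow> bit poly poly" where
  "gf_tuple_poly as = (\<Sum>i<length as. monom (nat_to_gf2poly (as ! i)) i)"

lemma gf_poly_eval_eq_poly_mod:
  "gf_poly_eval P as x = gf2poly_to_nat (poly (gf_tuple_poly as) (nat_to_gf2poly x) mod P)"
proof -
  have "poly (gf_tuple_poly as) z = (\<Sum>i<length as. nat_to_gf2poly (as ! i) * z ^ i)" for z
    unfolding gf_tuple_poly_def by (simp add: poly_sum poly_monom)
  then show ?thesis unfolding gf_poly_eval_def by simp
qed

lemma irreducible_imp_degree_pos: "irreducible (P :: 'a :: field poly) \<Longrightarrow> 0 < degree P"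
  by (metis gr0I irreducible_def is_unit_iff_degree)

lemma gf_poly_eval_less:
  assumes "irreducible P" "degree P = d"
  shows "gf_poly_eval P as x < 2 ^ d"
proof -
  have "P \<noteq> 0" using assms(1) by auto
  then have "degree (poly (gf_tuple_poly as) (nat_to_gf2poly x) mod P) < d"
    using degree_mod_less[of P "poly (gf_tuple_poly as) (nat_to_gf2poly x)"]
      irreducible_imp_degree_pos[OF assms(1)] assms(2)
    by (cases "poly (gf_tuple_poly as) (nat_to_gf2poly x) mod P = 0") auto
  then show ?thesis unfolding gf_poly_eval_eq_poly_mod by (rule gf2poly_to_nat_less_power)
qed

lemma finite_gf_tuples: "finite (gf_tuples d k)"
  unfolding gf_tuples_def using finite_lists_length_eq[of "{0..<2^d::nat}" k]
  by (simp add: conj_commute)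

lemma card_gf_tuples: "card (gf_tuples d k) = (2 ^ d) ^ k"
  unfolding gf_tuples_def using card_lists_length_eq[of "{0..<2^d::nat}" k]
  by (simp add: conj_commute)

lemma gf_tuples_nonempty: "gf_tuples d k \<noteq> {}"
proof -
  have "replicate k 0 \<in> gf_tuples d k" by (auto simp: gf_tuples_def)
  then show ?thesis by blast
qed

lemma eq_if_dvd_diff_degree_less:
  fixes P p q :: "'a :: field poly"
  assumes "P dvd p - q" "degree p < degree P" "degree q < degree P"
  shows "p = q"
proof (rule ccontr)
  assume "p \<noteq> q"
  then have "degree P \<le> degree (p - q)" using assms(1) by (intro dvd_imp_degree_le) auto
  moreover have "degree (p - q) < degree P" using assms(2,3) by (rule degree_diff_less)
  ultimately show False by simp
qed

text \<open>Two coefficient tuples giving the same values at \<open>k\<close> distinct points have a difference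
  polynomial of degree \<open>< k\<close> with \<open>k\<close> roots in the field \<open>GF(2)[X]/(P)\<close>, hence are equal.\<close>
lemma gf_tuples_eq_if_evals_eq:
  assumes irr: "irreducible P" and dP: "degree P = d"
    and T: "T \<subseteq> {0..<2^d}" "card T = k"
    and as: "as \<in> gf_tuples d k" and bs: "bs \<in> gf_tuples d k"
    and eq: "\<And>x. x \<in> T \<Longrightarrow> gf_poly_eval P as x = gf_poly_eval P bs x"
  shows "as = bs"
proof -
  have small_degree: "degree (nat_to_gf2poly x) < degree P" if "x < 2 ^ d" for x
    using degree_nat_to_gf2poly_less[OF that] irreducible_imp_degree_pos[OF irr] dP by simp
  have len: "length as = k" "length bs = k" using as bs by (auto simp: gf_tuples_def)
  define Q where "Q = gf_tuple_poly as - gf_tuple_poly bs"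
  define Z where "Z = nat_to_gf2poly ` T"
  have "inj_on nat_to_gf2poly T" by (metis inj_onI gf2poly_to_nat_nat_to_gf2poly)
  then have card_Z: "card Z = k" unfolding Z_def using T(2) by (simp add: card_image)
  have "finite Z" unfolding Z_def using T(1) finite_subset by blast
  have incongruent: "\<not> P dvd z - z'" if z: "z \<in> Z" "z' \<in> Z" "z \<noteq> z'" for z z'
  proof
    assume "P dvd z - z'"
    moreover obtain x x' where "x \<in> T" "x' \<in> T" "z = nat_to_gf2poly x" "z' = nat_to_gf2poly x'"
      using z(1,2) unfolding Z_def by auto
    ultimately have "z = z'" using T(1) small_degree by (intro eq_if_dvd_diff_degree_less) auto
    with z(3) show False by simp
  qed
  have roots: "P dvd poly Q z" if "z \<in> Z" for z
  proof -
    obtain x where x: "x \<in> T" "z = nat_to_gf2poly x" using \<open>z \<in> Z\<close> unfolding Z_def by auto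
    then have "gf2poly_to_nat (poly (gf_tuple_poly as) z mod P) = gf2poly_to_nat (poly (gf_tuple_poly bs) z mod P)"
      using eq by (simp add: gf_poly_eval_eq_poly_mod)
    then have "poly (gf_tuple_poly as) z mod P = poly (gf_tuple_poly bs) z mod P"
      by (metis nat_to_gf2poly_gf2poly_to_nat)
    then show ?thesis unfolding Q_def by (simp add: mod_eq_dvd_iff)
  qed
  have coeff_Q: "coeff Q i = (if i < k then nat_to_gf2poly (as ! i) - nat_to_gf2poly (bs ! i) else 0)" for i
    unfolding Q_def gf_tuple_poly_def len by (simp add: coeff_sum coeff_monom)
  have "as ! i = bs ! i" if "i < k" for i
  proof -
    have "as ! i \<in> set as" "bs ! i \<in> set bs" using that len by simp_all
    then have "as ! i < 2 ^ d" "bs ! i < 2 ^ d" using as bs by (auto simp: gf_tuples_def)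
    moreover have "P dvd nat_to_gf2poly (as ! i) - nat_to_gf2poly (bs ! i)"
      using prime_dvd_coeff_if_dvd_poly_on_incongruent[OF field_poly_irreducible_imp_prime[OF irr]
          \<open>finite Z\<close> incongruent _ roots, of i] coeff_Q card_Z that by auto
    ultimately have "nat_to_gf2poly (as ! i) = nat_to_gf2poly (bs ! i)"
      using small_degree eq_if_dvd_diff_degree_less by blast
    then show ?thesis by (metis gf2poly_to_nat_nat_to_gf2poly)
  qed
  then show "as = bs" using len by (simp add: nth_equalityI)
qed

lemma bij_betw_gf_poly_eval_restrict:
  assumes "irreducible P" "degree P = d" "T \<subseteq> {0..<2^d}" "card T = k"
  shows "bij_betw (\<lambda>as. restrict (gf_poly_eval P as) T) (gf_tuples d k) (PiE T (\<lambda>_. {0..<(2::nat)^d}))"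
proof -
  let ?ev = "\<lambda>as. restrict (gf_poly_eval P as) T"
  have "finite T" using assms(3) finite_subset by blast
  have inj: "inj_on ?ev (gf_tuples d k)"
    using gf_tuples_eq_if_evals_eq[OF assms] by (intro inj_onI) (metis restrict_apply')
  moreover have sub: "?ev ` gf_tuples d k \<subseteq> PiE T (\<lambda>_. {0..<(2::nat)^d})"
    using gf_poly_eval_less[OF assms(1,2)] by auto
  moreover have "card (PiE T (\<lambda>_. {0..<(2::nat)^d})) = card (?ev ` gf_tuples d k)"
    using \<open>finite T\<close> assms(4) by (simp add: card_PiE card_image[OF inj] card_gf_tuples)
  ultimately show ?thesis
    using \<open>finite T\<close> by (simp add: bij_betw_def card_subset_eq finite_PiE)
qed

lemma card_gf_tuples_evals_in:
  assumes irr: "irreducible P" and dP: "degree P = d"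
    and T: "T \<subseteq> {0..<2^d}" "card T \<le> k" and k: "k \<le> 2 ^ d"
    and C: "C \<subseteq> {0..<2^d}"
  shows "card {as \<in> gf_tuples d k. \<forall>x\<in>T. gf_poly_eval P as x \<in> C}
         = card C ^ card T * (2 ^ d) ^ (k - card T)"
proof -
  \<comment> \<open>extend \<open>T\<close> to \<open>k\<close> points, where evaluation is a bijection onto all value tables\<close>
  have "finite T" using T(1) finite_subset by blast
  then have "k - card T \<le> card ({0..<2^d} - T)"
    using T k by (simp add: card_Diff_subset)
  then obtain T2 where T2: "T2 \<subseteq> {0..<2^d} - T" "card T2 = k - card T"
    by (meson obtain_subset_with_card_n)
  have "finite T2" using T2(1) finite_subset by blast
  define T' where "T' = T \<union> T2"
  have disj: "T \<inter> T2 = {}" using T2(1) by auto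
  have "T' \<subseteq> {0..<2^d}" "card T' = k"
    using T T2 \<open>finite T\<close> \<open>finite T2\<close> disj unfolding T'_def by (auto simp: card_Un_disjoint)
  define ev where "ev as = restrict (gf_poly_eval P as) T'" for as
  have bij: "bij_betw ev (gf_tuples d k) (PiE T' (\<lambda>_. {0..<2^d}))"
    unfolding ev_def by (rule bij_betw_gf_poly_eval_restrict[OF irr dP \<open>T' \<subseteq> _\<close> \<open>card T' = k\<close>])
  define W where "W = PiE T' (\<lambda>x. if x \<in> T then C else {0..<(2::nat)^d})"
  have "W \<subseteq> PiE T' (\<lambda>_. {0..<2^d})" unfolding W_def using C by (intro PiE_mono) auto
  then have "ev ` {as \<in> gf_tuples d k. ev as \<in> W} = W"
    using bij by (force simp: bij_betw_def)
  moreover have "inj_on ev {as \<in> gf_tuples d k. ev as \<in> W}"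
    using bij by (auto simp: bij_betw_def intro: inj_on_subset)
  ultimately have "card {as \<in> gf_tuples d k. ev as \<in> W} = card W"
    using card_image by fastforce
  moreover have "ev as \<in> W \<longleftrightarrow> (\<forall>x\<in>T. gf_poly_eval P as x \<in> C)" for as
    using gf_poly_eval_less[OF irr dP] unfolding ev_def W_def T'_def restrict_PiE_iff by auto
  ultimately have "card {as \<in> gf_tuples d k. \<forall>x\<in>T. gf_poly_eval P as x \<in> C} = card W"
    by simp
  also have "card W = (\<Prod>x\<in>T \<union> T2. card (if x \<in> T then C else {0..<(2::nat)^d}))"
    unfolding W_def T'_def using \<open>finite T\<close> \<open>finite T2\<close> by (simp add: card_PiE)
  also have "\<dots> = (\<Prod>x\<in>T. card C) * (\<Prod>x\<in>T2. card {0..<(2::nat)^d})"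
  proof -
    have "(\<Prod>x\<in>T2. card (if x \<in> T then C else {0..<(2::nat)^d})) = (\<Prod>x\<in>T2. card {0..<(2::nat)^d})"
      using disj by (intro prod.cong) auto
    then show ?thesis using \<open>finite T\<close> \<open>finite T2\<close> disj by (simp add: prod.union_disjoint)
  qed
  also have "\<dots> = card C ^ card T * (2 ^ d) ^ (k - card T)" using T2(2) by simp
  finally show ?thesis .
qed

text \<open>Counting form of: for \<open>w\<close> uniform on \<open>\<Omega>\<close>, the values \<open>h w x\<close> at any \<open>k\<close> points of
  \<open>D\<close> are independent and uniform on \<open>{0..<b}\<close>.\<close>
definition k_wise_uniform :: "'w set \<Rightarrow> ('w \<Rightarrow> nat \<Rightarrow> nat) \<Rightarrow> nat set \<Rightarrow> nat \<Rightarrow> nat \<Rightarrow> bool" where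
  "k_wise_uniform \<Omega> h D b k \<longleftrightarrow> (\<forall>T B. T \<subseteq> D \<longrightarrow> card T \<le> k \<longrightarrow> B \<subseteq> {0..<b} \<longrightarrow>
     real (card {w\<in>\<Omega>. \<forall>x\<in>T. h w x \<in> B}) = real (card \<Omega>) * (real (card B) / real b) ^ card T)"

lemma card_mod_power_in:
  assumes "L \<le> d" "B \<subseteq> {0..<2^L}"
  shows "card {v\<in>{0..<(2::nat)^d}. v mod 2^L \<in> B} = card B * 2 ^ (d - L)"
proof -
  define F where "F = (\<lambda>(u, w). u + 2^L * (w::nat))"
  have pow_d: "(2::nat) ^ d = 2 ^ L * 2 ^ (d - L)" using assms(1) by (simp flip: power_add)
  have "{v\<in>{0..<(2::nat)^d}. v mod 2^L \<in> B} = F ` (B \<times> {0..<2^(d-L)})"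
  proof (intro equalityI subsetI)
    fix v assume v: "v \<in> {v\<in>{0..<(2::nat)^d}. v mod 2^L \<in> B}"
    then have "v div 2^L < 2^(d-L)" by (simp add: pow_d div_less_iff_less_mult mult.commute)
    moreover have "v = F (v mod 2^L, v div 2^L)" unfolding F_def by simp
    ultimately show "v \<in> F ` (B \<times> {0..<2^(d-L)})" using v by force
  next
    fix v assume "v \<in> F ` (B \<times> {0..<2^(d-L)})"
    then obtain u w where uw: "u \<in> B" "w < 2^(d-L)" "v = u + 2^L * w" unfolding F_def by auto
    have u: "u < 2^L" using uw(1) assms(2) by auto
    have "u + 2^L * w < 2^L * (w + 1)" using u by simp
    also have "\<dots> \<le> 2^L * 2^(d-L)" using uw(2) by (intro mult_left_mono) auto
    finally show "v \<in> {v\<in>{0..<(2::nat)^d}. v mod 2^L \<in> B}" using u uw by (simp add: pow_d)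
  qed
  moreover have "inj_on F (B \<times> {0..<2^(d-L)})"
  proof (rule inj_onI, clarify)
    fix u w u' w' assume "u \<in> B" "u' \<in> B" "F (u, w) = F (u', w')"
    moreover have "u < 2^L" "u' < 2^L" using \<open>u \<in> B\<close> \<open>u' \<in> B\<close> assms(2) by auto
    ultimately have "(u + 2^L * w) mod 2^L = u'" "(u + 2^L * w) div 2^L = w'"
      unfolding F_def by simp_all
    then show "u = u' \<and> w = w'" using \<open>u < 2^L\<close> by simp
  qed
  moreover have "finite B" using assms(2) finite_subset by blast
  ultimately show ?thesis by (simp add: card_image card_cartesian_product)
qed

lemma k_wise_uniform_gf_poly_hash:
  assumes irr: "irreducible P" and dP: "degree P = d" and "L \<le> d" and "k \<le> 2 ^ d"
  shows "k_wise_uniform (gf_tuples d k) (\<lambda>as x. gf_poly_eval P as x mod 2 ^ L) {0..<2^d} (2 ^ L) k"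
  unfolding k_wise_uniform_def
proof (intro allI impI)
  fix T B :: "nat set"
  assume T: "T \<subseteq> {0..<2^d}" "card T \<le> k" and B: "B \<subseteq> {0..<2 ^ L}"
  define C where "C = {v\<in>{0..<(2::nat)^d}. v mod 2^L \<in> B}"
  have card_C: "card C = card B * 2 ^ (d - L)"
    unfolding C_def by (rule card_mod_power_in[OF assms(3) B])
  have "{as \<in> gf_tuples d k. \<forall>x\<in>T. gf_poly_eval P as x mod 2 ^ L \<in> B}
      = {as \<in> gf_tuples d k. \<forall>x\<in>T. gf_poly_eval P as x \<in> C}"
    unfolding C_def using gf_poly_eval_less[OF irr dP] by auto
  also have "card \<dots> = card C ^ card T * (2 ^ d) ^ (k - card T)"
    by (rule card_gf_tuples_evals_in[OF irr dP T assms(4)]) (auto simp: C_def)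
  finally have "real (card {as \<in> gf_tuples d k. \<forall>x\<in>T. gf_poly_eval P as x mod 2 ^ L \<in> B})
      = (real (card B) * 2 ^ (d - L)) ^ card T * (2 ^ d) ^ (k - card T)"
    by (simp add: card_C)
  also have "\<dots> = (2 ^ d) ^ k * (real (card B) / 2 ^ L) ^ card T"
    using assms(3) T(2)
    by (simp add: power_diff power_mult_distrib power_divide field_simps flip: power_add)
  finally show "real (card {as \<in> gf_tuples d k. \<forall>x\<in>T. gf_poly_eval P as x mod 2 ^ L \<in> B})
      = real (card (gf_tuples d k)) * (real (card B) / real (2 ^ L)) ^ card T"
    by (simp add: card_gf_tuples)
qed

section \<open>Balls into bins under \<open>k\<close>-wise independence\<close>

lemma alternating_sum_choose:
  assumes "1 \<le> t"
  shows "(\<Sum>i\<le>l. (-1)^i * real (t choose i)) = (-1)^l * real ((t - 1) choose l)"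
  using gbinomial_sum_lower_neg[where a = "real t" and m = l] assms
  by (simp add: binomial_gbinomial of_nat_diff mult.commute)

lemma bonferroni_choose:
  assumes "1 \<le> k"
  shows "\<bar>of_bool (t = 0) - (\<Sum>i<k. (-1)^i * real (t choose i))\<bar> \<le> real (t choose k)"
proof (cases "t = 0")
  case True
  have "(\<Sum>i<k. (-1)^i * real (t choose i)) = (\<Sum>i\<in>{0}. (-1)^i * real (t choose i))"
    using True assms by (intro sum.mono_neutral_right) auto
  then show ?thesis using True by simp
next
  case False
  obtain l where k: "k = Suc l" using assms by (cases k) auto
  have "\<bar>of_bool (t = 0) - (\<Sum>i<k. (-1)^i * real (t choose i))\<bar> = real ((t - 1) choose l)"
    using alternating_sum_choose[of t l] False unfolding k lessThan_Suc_atMost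
    by (simp add: abs_mult power_abs)
  also have "\<dots> \<le> real (t choose k)"
    using False unfolding k by (cases t) auto
  finally show ?thesis .
qed

lemma power_div_fact_antimono:
  assumes "1 \<le> k" "k \<le> i"
  shows "(2::real) ^ i / fact i \<le> 2 ^ k / fact k"
  using assms(2)
proof (induction i rule: dec_induct)
  case (step i)
  have "(2::real) ^ Suc i / fact (Suc i) = (2 ^ i / fact i) * (2 / Suc i)"
    by (simp add: field_simps)
  also have "\<dots> \<le> 2 ^ i / fact i"
    using step assms(1) by (intro mult_left_le) auto
  finally show ?case using step by simp
qed simp

lemma choose_mult_power_le:
  assumes "k \<le> i" "2 \<le> k" "m \<le> b" "0 < b" "0 \<le> y" "y \<le> 2 / real b"
  shows "real (m choose i) * y ^ i \<le> (real m / b) ^ 2 * (2 ^ k / fact k)"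
proof -
  have "real (m choose i) * y ^ i \<le> (real m ^ i / fact i) * (2 / real b) ^ i"
  proof (intro mult_mono power_mono)
    have "real (m choose i) * fact i \<le> real m ^ i"
      using binomial_fact_pow[of m i] by (metis of_nat_fact of_nat_le_iff of_nat_mult of_nat_power)
    then show "real (m choose i) \<le> real m ^ i / fact i" by (simp add: field_simps)
  qed (use assms in auto)
  also have "\<dots> = (2 ^ i / fact i) * (real m / b) ^ i"
    by (simp add: power_divide field_simps power_mult_distrib)
  also have "\<dots> \<le> (2 ^ k / fact k) * (real m / b) ^ 2"
  proof (intro mult_mono power_div_fact_antimono)
    show "(real m / b) ^ i \<le> (real m / b) ^ 2"
      using assms by (intro power_decreasing) auto
  qed (use assms in auto)
  finally show ?thesis by (simp add: algebra_simps)
qed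

lemma binomial_truncation_error:
  assumes "2 \<le> k" "m \<le> b" "0 < b" "0 \<le> y" "y \<le> 2 / real b"
  shows "\<bar>(1 - y) ^ m - (\<Sum>i<k. (-1)^i * real (m choose i) * y ^ i)\<bar>
           \<le> real m * ((real m / b) ^ 2 * (2 ^ k / fact k))"
proof -
  define f where "f i = (-1)^i * real (m choose i) * y ^ i" for i
  define \<tau> where "\<tau> = (real m / b) ^ 2 * (2 ^ k / fact k)"
  have "(1 - y) ^ m = (\<Sum>i\<le>m. real (m choose i) * (-y) ^ i * 1 ^ (m - i))"
    using binomial_ring[of "-y" 1 m] by simp
  also have "\<dots> = (\<Sum>i\<le>m. f i)"
    unfolding f_def by (intro sum.cong refl) (simp add: power_minus[of y])
  also have "\<dots> = (\<Sum>i<k + m. f i)"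
    using assms(1) by (intro sum.mono_neutral_left) (auto simp: f_def binomial_eq_0)
  also have "\<dots> = (\<Sum>i<k. f i) + (\<Sum>i\<in>{k..<k + m}. f i)"
    using sum.atLeastLessThan_concat[of 0 k "k + m" f] by (simp add: atLeast0LessThan)
  finally have "\<bar>(1 - y) ^ m - (\<Sum>i<k. f i)\<bar> = \<bar>\<Sum>i\<in>{k..<k + m}. f i\<bar>" by simp
  also have "\<dots> \<le> (\<Sum>i\<in>{k..<k + m}. \<bar>f i\<bar>)" by (rule sum_abs)
  also have "\<dots> \<le> (\<Sum>i\<in>{k..m}. \<tau>)"
  proof -
    have "(\<Sum>i\<in>{k..<k + m}. \<bar>f i\<bar>) = (\<Sum>i\<in>{k..m}. \<bar>f i\<bar>)"
      using assms(1) by (intro sum.mono_neutral_right) (auto simp: f_def binomial_eq_0)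
    also have "\<dots> \<le> (\<Sum>i\<in>{k..m}. \<tau>)"
    proof (rule sum_mono)
      fix i assume "i \<in> {k..m}"
      then show "\<bar>f i\<bar> \<le> \<tau>"
        using choose_mult_power_le[of k i, OF _ assms] assms(4)
        by (simp add: f_def \<tau>_def abs_mult power_abs)
    qed
    finally show ?thesis .
  qed
  also have "\<dots> = real (Suc m - k) * \<tau>" by simp
  also have "\<dots> \<le> real m * \<tau>"
    using assms(1) by (intro mult_right_mono) (auto simp: \<tau>_def)
  finally show ?thesis unfolding f_def \<tau>_def .
qed

lemma power_Suc_add_ge:
  fixes r z :: real assumes "0 \<le> r" "0 \<le> z"
  shows "r ^ Suc n + real (Suc n) * z * r ^ n \<le> (r + z) ^ Suc n"
proof (induction n)
  case (Suc n)
  have "r ^ Suc (Suc n) + real (Suc (Suc n)) * z * r ^ Suc n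
      \<le> (r + z) * (r ^ Suc n + real (Suc n) * z * r ^ n)"
    using assms by (simp add: algebra_simps)
  also have "\<dots> \<le> (r + z) * (r + z) ^ Suc n"
    using Suc assms by (intro mult_left_mono) auto
  finally show ?case by simp
qed simp

lemma power_diff_power_le:
  fixes a c :: real assumes "0 \<le> c" "c \<le> a" "a \<le> 1"
  shows "a ^ n - c ^ n \<le> real n * (a - c)"
proof (induction n)
  case (Suc n)
  have "a ^ Suc n - c ^ Suc n = a * (a ^ n - c ^ n) + c ^ n * (a - c)" by (simp add: algebra_simps)
  also have "\<dots> \<le> 1 * (a ^ n - c ^ n) + 1 * (a - c)"
    using assms by (intro add_mono mult_right_mono) (auto simp: power_mono power_le_one)
  also have "\<dots> \<le> real (Suc n) * (a - c)" using Suc by (simp add: algebra_simps)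
  finally show ?case .
qed simp

text \<open>The left-hand side is the variance of the number of empty bins when \<open>Suc n\<close> balls are thrown
  fully independently into \<open>b\<close> bins.\<close>
lemma empty_bins_variance_le:
  fixes b :: real assumes b: "2 \<le> b"
  shows "b * (1 - 1/b) ^ Suc n + b * (b - 1) * (1 - 2/b) ^ Suc n - b\<^sup>2 * ((1 - 1/b) ^ Suc n)\<^sup>2
     \<le> real (Suc n) ^ 2 / b"
proof -
  define x where "x = 1 / b"
  define q where "q = 1 - x"
  define r where "r = 1 - 2 * x"
  define m where "m = Suc n"
  have x: "0 < x" "x \<le> 1/2" "b * x = 1" unfolding x_def using b by auto
  have "0 \<le> r" "r \<le> q" "0 \<le> q" "q \<le> 1" unfolding q_def r_def using x by auto
  have "(q ^ m)\<^sup>2 = (r + x\<^sup>2) ^ Suc n"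
    unfolding q_def r_def m_def by (simp add: power2_eq_square algebra_simps flip: power_mult_distrib)
  then have lower: "r ^ m + real m * x\<^sup>2 * r ^ n \<le> (q ^ m)\<^sup>2"
    using power_Suc_add_ge[OF \<open>0 \<le> r\<close>, of "x\<^sup>2" n] unfolding m_def by simp
  have "b * (b - 1) * x\<^sup>2 = q" unfolding q_def x_def using b by (simp add: field_simps power2_eq_square)
  then have "b * q ^ m + b * (b - 1) * r ^ m - b\<^sup>2 * (q ^ m)\<^sup>2
      \<le> b * q ^ m + b * (b - 1) * ((q ^ m)\<^sup>2 - real m * x\<^sup>2 * r ^ n) - b\<^sup>2 * (q ^ m)\<^sup>2"
    using lower b by (intro diff_right_mono add_left_mono mult_left_mono) auto
  also have "\<dots> = b * q ^ m + b * (b - 1) * (q ^ m)\<^sup>2 - real m * (b * (b - 1) * x\<^sup>2) * r ^ n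
      - b\<^sup>2 * (q ^ m)\<^sup>2"
    by (simp add: algebra_simps)
  also have "\<dots> = b * q ^ m * (1 - q ^ m) - real m * q * r ^ n"
    unfolding \<open>b * (b - 1) * x\<^sup>2 = q\<close> by (simp add: algebra_simps power2_eq_square)
  also have "\<dots> \<le> b * q ^ m * (real m * x) - real m * q * r ^ n"
    using Bernoulli_inequality[of "-x" m] x \<open>0 \<le> q\<close> b
    by (intro diff_right_mono mult_left_mono) (auto simp: q_def)
  also have "\<dots> = real m * q ^ m * (b * x) - real m * q * r ^ n"
    by (simp add: algebra_simps)
  also have "\<dots> = real m * q * (q ^ n - r ^ n)"
    unfolding x(3) by (simp add: m_def algebra_simps)
  also have "\<dots> \<le> real m * 1 * (real n * x)"
    using power_diff_power_le[OF \<open>0 \<le> r\<close> \<open>r \<le> q\<close> \<open>q \<le> 1\<close>, of n] \<open>0 \<le> q\<close> \<open>q \<le> 1\<close>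
      \<open>0 \<le> r\<close> \<open>r \<le> q\<close>
    by (intro mult_mono) (auto simp: q_def r_def power_mono)
  also have "\<dots> \<le> real m ^ 2 / b"
    unfolding m_def x_def using b by (simp add: power2_eq_square field_simps)
  finally show ?thesis unfolding m_def q_def r_def x_def by simp
qed

lemma card_abs_gt_mult_sq_le_sum_sq:
  fixes f :: "'a \<Rightarrow> real"
  assumes "finite A" "0 < \<theta>"
  shows "real (card {x\<in>A. \<theta> < \<bar>f x\<bar>}) * \<theta>\<^sup>2 \<le> (\<Sum>x\<in>A. (f x)\<^sup>2)"
proof -
  have "real (card {x\<in>A. \<theta> < \<bar>f x\<bar>}) * \<theta>\<^sup>2 = (\<Sum>x\<in>{x\<in>A. \<theta> < \<bar>f x\<bar>}. \<theta>\<^sup>2)" by simp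
  also have "\<dots> \<le> (\<Sum>x\<in>{x\<in>A. \<theta> < \<bar>f x\<bar>}. (f x)\<^sup>2)"
    using assms(2) by (intro sum_mono) (metis (mono_tags) abs_le_square_iff abs_of_pos
        less_le mem_Collect_eq power2_abs)
  also have "\<dots> \<le> (\<Sum>x\<in>A. (f x)\<^sup>2)"
    using assms(1) by (intro sum_mono2) auto
  finally show ?thesis .
qed

definition empty_bins :: "nat \<Rightarrow> (nat \<Rightarrow> nat) \<Rightarrow> nat set \<Rightarrow> nat" where
  "empty_bins b g U = card {j\<in>{0..<b}. \<forall>u\<in>U. g u \<noteq> j}"

lemma empty_bins_eq_sum: "real (empty_bins b g U) = (\<Sum>j\<in>{0..<b}. of_bool (\<forall>u\<in>U. g u \<notin> {j}))"
  by (simp add: empty_bins_def sum.inter_filter[symmetric] of_bool_def)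

lemma empty_bins_sq_eq_sum:
  "(real (empty_bins b g U))\<^sup>2 = (\<Sum>j\<in>{0..<b}. \<Sum>j'\<in>{0..<b}. of_bool (\<forall>u\<in>U. g u \<notin> {j, j'}))"
  unfolding empty_bins_eq_sum power2_eq_square sum_product by (intro sum.cong refl) auto

lemma sum_power2_diff_const:
  fixes f :: "'a \<Rightarrow> real"
  shows "(\<Sum>x\<in>A. (f x - c)\<^sup>2) = (\<Sum>x\<in>A. (f x)\<^sup>2) - 2 * c * (\<Sum>x\<in>A. f x) + real (card A) * c\<^sup>2"
proof -
  have "(f x - c)\<^sup>2 = (f x)\<^sup>2 - 2 * c * f x + c\<^sup>2" for x by (simp add: power2_diff mult_ac)
  then show ?thesis by (simp add: sum.distrib sum_subtractf flip: sum_distrib_left)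
qed

lemma sum_power_one_minus_card_pair:
  assumes "j < b"
  shows "(\<Sum>j'\<in>{0..<b}. (1 - real (card {j, j'}) / b) ^ m)
    = real b * (1 - 2 / b) ^ m + ((1 - 1 / b) ^ m - (1 - 2 / b) ^ m)"
proof -
  have "(\<Sum>j'\<in>{0..<b}. (1 - real (card {j, j'}) / b) ^ m)
      = (\<Sum>j'\<in>{0..<b}. (1 - 2 / b) ^ m + (if j' = j then (1 - 1 / b) ^ m - (1 - 2 / b) ^ m else 0))"
    by (intro sum.cong refl) auto
  then show ?thesis using assms by (simp add: sum.distrib)
qed

context
  fixes \<Omega> :: "'w set" and h :: "'w \<Rightarrow> nat \<Rightarrow> nat" and D U :: "nat set" and b k :: nat
  assumes finite_\<Omega>: "finite \<Omega>" and uniform: "k_wise_uniform \<Omega> h D b k"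
    and finite_U: "finite U" and U_subset: "U \<subseteq> D"
begin

lemma k_wise_uniform_binomial_moment:
  assumes "i \<le> k" "B \<subseteq> {0..<b}"
  shows "(\<Sum>w\<in>\<Omega>. real (card {u\<in>U. h w u \<in> B} choose i))
       = real (card \<Omega>) * real (card U choose i) * (real (card B) / b) ^ i"
proof -
  define S where "S = {V. V \<subseteq> U \<and> card V = i}"
  have "finite S" unfolding S_def using finite_U by simp
  have choose_eq: "card {u\<in>U. h w u \<in> B} choose i = card {V\<in>S. \<forall>u\<in>V. h w u \<in> B}" for w
  proof -
    have "card {u\<in>U. h w u \<in> B} choose i = card {V. V \<subseteq> {u\<in>U. h w u \<in> B} \<and> card V = i}"
      using finite_U by (intro n_subsets[symmetric]) auto
    also have "{V. V \<subseteq> {u\<in>U. h w u \<in> B} \<and> card V = i} = {V\<in>S. \<forall>u\<in>V. h w u \<in> B}"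
      unfolding S_def by auto
    finally show ?thesis .
  qed
  have "(\<Sum>w\<in>\<Omega>. real (card {u\<in>U. h w u \<in> B} choose i))
      = (\<Sum>w\<in>\<Omega>. \<Sum>V\<in>S. of_bool (\<forall>u\<in>V. h w u \<in> B))"
    unfolding choose_eq using \<open>finite S\<close> by (simp add: sum.inter_filter[symmetric] of_bool_def)
  also have "\<dots> = (\<Sum>V\<in>S. real (card {w\<in>\<Omega>. \<forall>u\<in>V. h w u \<in> B}))"
    using finite_\<Omega> by (subst sum.swap) (simp add: sum.inter_filter[symmetric] of_bool_def)
  also have "\<dots> = (\<Sum>V\<in>S. real (card \<Omega>) * (real (card B) / b) ^ i)"
    using uniform U_subset assms unfolding k_wise_uniform_def S_def by (intro sum.cong) auto
  also have "\<dots> = real (card U choose i) * (real (card \<Omega>) * (real (card B) / b) ^ i)"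
    using n_subsets[OF finite_U, of i] by (simp add: S_def)
  finally show ?thesis by simp
qed

text \<open>Inclusion-exclusion truncated after \<open>k\<close> terms only involves the moments controlled by
  \<open>k\<close>-wise uniformity.\<close>
lemma card_avoiding_bonferroni:
  assumes "B \<subseteq> {0..<b}" "1 \<le> k"
  shows "\<bar>real (card {w\<in>\<Omega>. \<forall>u\<in>U. h w u \<notin> B})
      - real (card \<Omega>) * (\<Sum>i<k. (-1)^i * real (card U choose i) * (real (card B) / b) ^ i)\<bar>
    \<le> real (card \<Omega>) * real (card U choose k) * (real (card B) / b) ^ k"
proof -
  define t where "t w = card {u\<in>U. h w u \<in> B}" for w
  have "t w = 0 \<longleftrightarrow> (\<forall>u\<in>U. h w u \<notin> B)" for w
    using finite_U unfolding t_def by auto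
  then have count: "real (card {w\<in>\<Omega>. \<forall>u\<in>U. h w u \<notin> B}) = (\<Sum>w\<in>\<Omega>. of_bool (t w = 0))"
    using finite_\<Omega> by (simp add: sum.inter_filter[symmetric] of_bool_def)
  have moments: "(\<Sum>w\<in>\<Omega>. real (t w choose i))
      = real (card \<Omega>) * real (card U choose i) * (real (card B) / b) ^ i" if "i \<le> k" for i
    unfolding t_def using k_wise_uniform_binomial_moment[OF that assms(1)] .
  have "(\<Sum>w\<in>\<Omega>. \<Sum>i<k. (-1)^i * real (t w choose i))
      = (\<Sum>i<k. (-1)^i * (\<Sum>w\<in>\<Omega>. real (t w choose i)))"
    by (subst sum.swap) (simp add: sum_distrib_left)
  also have "\<dots> = real (card \<Omega>) * (\<Sum>i<k. (-1)^i * real (card U choose i) * (real (card B) / b) ^ i)"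
    using moments by (simp add: sum_distrib_left mult_ac)
  finally have "\<bar>real (card {w\<in>\<Omega>. \<forall>u\<in>U. h w u \<notin> B})
      - real (card \<Omega>) * (\<Sum>i<k. (-1)^i * real (card U choose i) * (real (card B) / b) ^ i)\<bar>
      = \<bar>\<Sum>w\<in>\<Omega>. of_bool (t w = 0) - (\<Sum>i<k. (-1)^i * real (t w choose i))\<bar>"
    by (simp add: count sum_subtractf)
  also have "\<dots> \<le> (\<Sum>w\<in>\<Omega>. real (t w choose k))"
    using assms(2) by (intro order_trans[OF sum_abs] sum_mono bonferroni_choose)
  also have "\<dots> = real (card \<Omega>) * real (card U choose k) * (real (card B) / b) ^ k"
    by (rule moments) simp
  finally show ?thesis .
qed

lemma card_avoiding_k_wise_uniform:
  assumes B: "B \<subseteq> {0..<b}" "card B \<le> 2" and "2 \<le> k" "card U \<le> b" "0 < b"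
  shows "\<bar>real (card {w\<in>\<Omega>. \<forall>u\<in>U. h w u \<notin> B}) - real (card \<Omega>) * (1 - real (card B) / b) ^ card U\<bar>
    \<le> real (card \<Omega>) * (2 * (real (card U) ^ 2 * 2 ^ k / (fact k * real b)))"
proof -
  define m where "m = card U"
  define N where "N = real (card \<Omega>)"
  define y where "y = real (card B) / b"
  define S where "S = (\<Sum>i<k. (-1)^i * real (m choose i) * y ^ i)"
  define \<tau> where "\<tau> = (real m / b) ^ 2 * (2 ^ k / fact k)"
  define \<delta> where "\<delta> = real m ^ 2 * 2 ^ k / (fact k * real b)"
  have y: "0 \<le> y" "y \<le> 2 / real b" using B \<open>0 < b\<close> unfolding y_def by (auto simp: divide_right_mono)
  have "real (m choose k) * y ^ k \<le> real m * \<tau>"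
  proof (cases "k \<le> m")
    case True
    then have "real (m choose k) * y ^ k \<le> \<tau>"
      using choose_mult_power_le[OF _ \<open>2 \<le> k\<close> _ \<open>0 < b\<close> y] \<open>card U \<le> b\<close> by (simp add: \<tau>_def m_def)
    also have "\<dots> \<le> real m * \<tau>"
      using True \<open>2 \<le> k\<close> by (intro mult_le_cancel_right1[THEN iffD2]) (auto simp: \<tau>_def not_less)
    finally show ?thesis .
  qed (simp add: binomial_eq_0 \<tau>_def)
  then have "\<bar>real (card {w\<in>\<Omega>. \<forall>u\<in>U. h w u \<notin> B}) - N * S\<bar> \<le> N * (real m * \<tau>)"
    using card_avoiding_bonferroni[OF B(1)] \<open>2 \<le> k\<close>
    by (fastforce simp: N_def S_def m_def y_def mult.assoc intro: order_trans mult_left_mono)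
  moreover have "\<bar>N * (1 - y) ^ m - N * S\<bar> \<le> N * (real m * \<tau>)"
  proof -
    have "\<bar>(1 - y) ^ m - S\<bar> \<le> real m * \<tau>"
      unfolding \<tau>_def S_def m_def by (rule binomial_truncation_error[OF \<open>2 \<le> k\<close> \<open>card U \<le> b\<close> \<open>0 < b\<close> y])
    moreover have "\<bar>N * (1 - y) ^ m - N * S\<bar> = N * \<bar>(1 - y) ^ m - S\<bar>"
      by (simp add: abs_mult N_def flip: right_diff_distrib)
    ultimately show ?thesis by (simp add: N_def mult_left_mono)
  qed
  ultimately have "\<bar>real (card {w\<in>\<Omega>. \<forall>u\<in>U. h w u \<notin> B}) - N * (1 - y) ^ m\<bar>
      \<le> N * (real m * \<tau>) + N * (real m * \<tau>)"
    by arith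
  also have "\<dots> \<le> N * (2 * \<delta>)"
  proof -
    have "real m * \<tau> = (real m / b) * \<delta>"
      unfolding \<tau>_def \<delta>_def by (simp add: field_simps power2_eq_square)
    also have "\<dots> \<le> \<delta>"
      using \<open>card U \<le> b\<close> \<open>0 < b\<close> by (intro mult_left_le_one_le) (auto simp: m_def \<delta>_def)
    finally have "N * (real m * \<tau>) \<le> N * \<delta>" by (rule mult_left_mono) (simp add: N_def)
    then show ?thesis by (simp add: distrib_left[symmetric] flip: mult_2)
  qed
  finally show ?thesis unfolding N_def y_def m_def \<delta>_def .
qed

lemma sum_empty_bins_ge:
  assumes "2 \<le> k" "card U \<le> b" "0 < b"
  defines "\<delta> \<equiv> real (card U) ^ 2 * 2 ^ k / (fact k * real b)"
  shows "real b * (real (card \<Omega>) * (1 - 1 / b) ^ card U - real (card \<Omega>) * (2 * \<delta>))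
    \<le> (\<Sum>w\<in>\<Omega>. real (empty_bins b (h w) U))"
proof -
  have "real b * (real (card \<Omega>) * (1 - 1 / b) ^ card U - real (card \<Omega>) * (2 * \<delta>))
      = (\<Sum>j\<in>{0..<b}. real (card \<Omega>) * (1 - 1 / b) ^ card U - real (card \<Omega>) * (2 * \<delta>))"
    by simp
  also have "\<dots> \<le> (\<Sum>j\<in>{0..<b}. \<Sum>w\<in>\<Omega>. of_bool (\<forall>u\<in>U. h w u \<notin> {j}))"
  proof (rule sum_mono)
    fix j assume "j \<in> {0..<b}"
    then show "real (card \<Omega>) * (1 - 1 / b) ^ card U - real (card \<Omega>) * (2 * \<delta>)
        \<le> (\<Sum>w\<in>\<Omega>. of_bool (\<forall>u\<in>U. h w u \<notin> {j}))"
      using card_avoiding_k_wise_uniform[of "{j}", OF _ _ assms(1-3)] finite_\<Omega>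
      by (simp add: \<delta>_def sum.inter_filter[symmetric] of_bool_def abs_le_iff)
  qed
  also have "\<dots> = (\<Sum>w\<in>\<Omega>. real (empty_bins b (h w) U))"
    unfolding empty_bins_eq_sum by (rule sum.swap)
  finally show ?thesis .
qed

lemma sum_empty_bins_sq_le:
  assumes "2 \<le> k" "card U \<le> b" "0 < b"
  defines "\<delta> \<equiv> real (card U) ^ 2 * 2 ^ k / (fact k * real b)"
  shows "(\<Sum>w\<in>\<Omega>. (real (empty_bins b (h w) U))\<^sup>2)
    \<le> real (card \<Omega>) * (real b * (1 - 1 / b) ^ card U + real b * (real b - 1) * (1 - 2 / b) ^ card U)
      + (real b)\<^sup>2 * (real (card \<Omega>) * (2 * \<delta>))"
proof -
  define N where "N = real (card \<Omega>)"
  define p where "p j j' = (1 - real (card {j, j'}) / b) ^ card U" for j j' :: nat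
  have "(\<Sum>w\<in>\<Omega>. (real (empty_bins b (h w) U))\<^sup>2)
      = (\<Sum>j\<in>{0..<b}. \<Sum>j'\<in>{0..<b}. \<Sum>w\<in>\<Omega>. of_bool (\<forall>u\<in>U. h w u \<notin> {j, j'}))"
    unfolding empty_bins_sq_eq_sum by (simp add: sum.swap[of _ \<Omega>])
  also have "\<dots> \<le> (\<Sum>j\<in>{0..<b}. \<Sum>j'\<in>{0..<b}. N * p j j' + N * (2 * \<delta>))"
  proof (intro sum_mono)
    fix j j' assume "j \<in> {0..<b}" "j' \<in> {0..<b}"
    then have "{j, j'} \<subseteq> {0..<b}" by simp
    moreover have "card {j, j'} \<le> 2" by (simp add: card_insert_if)
    ultimately have "\<bar>real (card {w\<in>\<Omega>. \<forall>u\<in>U. h w u \<notin> {j, j'}}) - N * p j j'\<bar> \<le> N * (2 * \<delta>)"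
      unfolding p_def N_def \<delta>_def by (rule card_avoiding_k_wise_uniform[OF _ _ assms(1-3)])
    then have "real (card {w\<in>\<Omega>. \<forall>u\<in>U. h w u \<notin> {j, j'}}) - N * p j j' \<le> N * (2 * \<delta>)"
      by (rule abs_le_D1)
    moreover have "(\<Sum>w\<in>\<Omega>. of_bool (\<forall>u\<in>U. h w u \<notin> {j, j'}))
        = real (card {w\<in>\<Omega>. \<forall>u\<in>U. h w u \<notin> {j, j'}})"
      using finite_\<Omega> by (simp add: sum.inter_filter[symmetric] of_bool_def)
    ultimately show "(\<Sum>w\<in>\<Omega>. of_bool (\<forall>u\<in>U. h w u \<notin> {j, j'})) \<le> N * p j j' + N * (2 * \<delta>)"
      by linarith
  qed
  also have "\<dots> = N * (real b * (1 - 1 / b) ^ card U + real b * (real b - 1) * (1 - 2 / b) ^ card U)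
      + (real b)\<^sup>2 * (N * (2 * \<delta>))"
  proof -
    have "(\<Sum>j\<in>{0..<b}. \<Sum>j'\<in>{0..<b}. p j j')
        = (\<Sum>j\<in>{0..<b}. real b * (1 - 2 / b) ^ card U + ((1 - 1 / b) ^ card U - (1 - 2 / b) ^ card U))"
      unfolding p_def by (intro sum.cong refl) (simp add: sum_power_one_minus_card_pair)
    then have "(\<Sum>j\<in>{0..<b}. \<Sum>j'\<in>{0..<b}. p j j')
        = real b * (1 - 1 / b) ^ card U + real b * (real b - 1) * (1 - 2 / b) ^ card U"
      by (simp add: algebra_simps)
    then show ?thesis
      by (simp add: sum.distrib power2_eq_square flip: sum_distrib_left)
  qed
  finally show ?thesis unfolding N_def .
qed

lemma sum_sq_deviation_empty_bins_le:
  assumes "1 \<le> card U" "card U \<le> b" "2 \<le> b" "2 \<le> k" "6 * real b ^ 2 * 2 ^ k \<le> fact k"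
  shows "(\<Sum>w\<in>\<Omega>. (real (empty_bins b (h w) U) - real b * (1 - 1 / b) ^ card U)\<^sup>2)
    \<le> real (card \<Omega>) * (2 * real (card U) ^ 2 / real b)"
proof -
  define X where "X w = real (empty_bins b (h w) U)" for w
  define m where "m = card U"
  define N where "N = real (card \<Omega>)"
  define e1 where "e1 = (1 - 1 / real b) ^ m"
  define e2 where "e2 = (1 - 2 / real b) ^ m"
  define \<delta> where "\<delta> = real m ^ 2 * 2 ^ k / (fact k * real b)"
  have "0 \<le> N" "0 \<le> \<delta>" "0 \<le> e1" "e1 \<le> 1"
    using assms(3) by (auto simp: N_def \<delta>_def e1_def power_le_one)
  have first: "real b * (N * e1 - N * (2 * \<delta>)) \<le> (\<Sum>w\<in>\<Omega>. X w)"
    using sum_empty_bins_ge[OF assms(4,2)] assms(3) unfolding X_def N_def e1_def \<delta>_def m_def by simp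
  have second: "(\<Sum>w\<in>\<Omega>. (X w)\<^sup>2) \<le> N * (real b * e1 + real b * (real b - 1) * e2) + (real b)\<^sup>2 * (N * (2 * \<delta>))"
    using sum_empty_bins_sq_le[OF assms(4,2)] assms(3)
    unfolding X_def N_def e1_def e2_def \<delta>_def m_def by simp
  obtain n where n: "m = Suc n" using assms(1) unfolding m_def by (cases "card U") auto
  have variance: "real b * e1 + real b * (real b - 1) * e2 - (real b)\<^sup>2 * e1\<^sup>2 \<le> real m ^ 2 / real b"
    using empty_bins_variance_le[of "real b" n] assms(3) unfolding e1_def e2_def n by simp
  have small_\<delta>: "6 * (real b)\<^sup>2 * \<delta> \<le> real m ^ 2 / real b"
  proof -
    have "6 * (real b)\<^sup>2 * \<delta> = (6 * real b ^ 2 * 2 ^ k) * (real m ^ 2 / (fact k * real b))"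
      unfolding \<delta>_def by (simp add: field_simps)
    also have "\<dots> \<le> fact k * (real m ^ 2 / (fact k * real b))"
      using assms(5) by (intro mult_right_mono) auto
    finally show ?thesis by simp
  qed
  have "(\<Sum>w\<in>\<Omega>. (X w - real b * e1)\<^sup>2)
      = (\<Sum>w\<in>\<Omega>. (X w)\<^sup>2) - 2 * (real b * e1) * (\<Sum>w\<in>\<Omega>. X w) + N * (real b * e1)\<^sup>2"
    unfolding N_def by (rule sum_power2_diff_const)
  also have "\<dots> \<le> N * (real b * e1 + real b * (real b - 1) * e2 - (real b)\<^sup>2 * e1\<^sup>2)
      + 2 * N * \<delta> * ((real b)\<^sup>2 + 2 * (real b * e1) * real b)"
    using first second \<open>0 \<le> e1\<close> mult_left_mono[OF first, of "2 * (real b * e1)"]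
    by (simp add: algebra_simps power2_eq_square)
  also have "\<dots> \<le> N * (real m ^ 2 / real b) + 2 * N * \<delta> * (3 * (real b)\<^sup>2)"
  proof (intro add_mono mult_left_mono)
    have "real b * e1 \<le> real b" using \<open>e1 \<le> 1\<close> by (simp add: mult_left_le)
    from mult_right_mono[OF this, of "real b"]
    show "(real b)\<^sup>2 + 2 * (real b * e1) * real b \<le> 3 * (real b)\<^sup>2"
      by (simp add: power2_eq_square)
  qed (use variance \<open>0 \<le> N\<close> \<open>0 \<le> \<delta>\<close> in auto)
  also have "\<dots> = N * (real m ^ 2 / real b) + N * (6 * (real b)\<^sup>2 * \<delta>)"
    by (simp add: algebra_simps)
  also have "\<dots> \<le> N * (real m ^ 2 / real b) + N * (real m ^ 2 / real b)"
    using mult_left_mono[OF small_\<delta> \<open>0 \<le> N\<close>] by simp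
  also have "\<dots> = N * (2 * real m ^ 2 / real b)"
    by (simp add: algebra_simps)
  finally show ?thesis unfolding X_def N_def e1_def m_def .
qed

lemma card_empty_bins_deviation_le:
  assumes "1 \<le> card U" "card U \<le> b" "2 \<le> b" "2 \<le> k" "6 * real b ^ 2 * 2 ^ k \<le> fact k" "0 < \<theta>"
  shows "real (card {w\<in>\<Omega>. \<theta> < \<bar>real (empty_bins b (h w) U) - real b * (1 - 1 / b) ^ card U\<bar>}) * \<theta>\<^sup>2
     \<le> real (card \<Omega>) * (2 * real (card U) ^ 2 / real b)"
  using card_abs_gt_mult_sq_le_sum_sq[OF finite_\<Omega> assms(6)] sum_sq_deviation_empty_bins_le[OF assms(1-5)]
  by (rule order_trans)

end

section \<open>Parameters and events\<close>

lemma log_two_ratio_pos: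
  assumes "0 < \<epsilon>" "\<epsilon> < 1"
  shows "0 < log 2 (9 * 2 ^ 23 / \<epsilon>\<^sup>2)"
proof -
  have "\<epsilon>\<^sup>2 < 1" using assms by (simp add: power_less_one_iff abs_less_iff)
  then have "1 < 9 * 2 ^ 23 / \<epsilon>\<^sup>2" using assms(1) by (simp add: field_simps)
  then show ?thesis by (subst zero_less_log_cancel_iff) auto
qed

lemma log_b_ge_1:
  assumes "0 < \<epsilon>" "\<epsilon> < 1"
  shows "1 \<le> log_b \<epsilon>"
  using log_two_ratio_pos[OF assms] unfolding log_b_def by linarith

lemma b_param_ge:
  assumes "0 < \<epsilon>" "\<epsilon> < 1"
  shows "9 * 2 ^ 23 / \<epsilon>\<^sup>2 \<le> real (b_param \<epsilon>)"
proof -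
  define x where "x = 9 * 2 ^ 23 / \<epsilon>\<^sup>2"
  have "0 < log 2 x" using log_two_ratio_pos[OF assms] by (simp add: x_def)
  have "x = 2 powr log 2 x" using assms(1) by (simp add: x_def)
  also have "\<dots> \<le> 2 powr real_of_int \<lceil>log 2 x\<rceil>" by (intro powr_mono) auto
  also have "\<lceil>log 2 x\<rceil> = int (log_b \<epsilon>)" using \<open>0 < log 2 x\<close> by (simp add: log_b_def x_def)
  finally show ?thesis by (simp add: x_def b_param_def powr_realpow)
qed

lemma b_param_ge_2: "0 < \<epsilon> \<Longrightarrow> \<epsilon> < 1 \<Longrightarrow> 2 \<le> b_param \<epsilon>"
  using log_b_ge_1[of \<epsilon>] unfolding b_param_def
  by (metis power_increasing power_one_right zero_less_numeral one_le_numeral)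

lemma k_param_bounds:
  assumes "0 < \<epsilon>" "\<epsilon> < 1"
  shows "5 * real (log_b \<epsilon>) + 16 \<le> real (k_param \<epsilon>)"
    and "real (k_param \<epsilon>) \<le> 6 * real (log_b \<epsilon>) + 17"
proof -
  have "ln (real (b_param \<epsilon>)) = real (log_b \<epsilon>) * ln 2"
    by (simp add: b_param_def ln_realpow)
  then have k: "k_param \<epsilon> = nat \<lceil>15 / 2 * ln 2 * real (log_b \<epsilon>) + 16\<rceil>"
    by (simp add: k_param_def mult_ac)
  have "5 * real (log_b \<epsilon>) \<le> 15 / 2 * ln 2 * real (log_b \<epsilon>)"
    using ln2_ge_two_thirds by (intro mult_right_mono) auto
  moreover have "15 / 2 * ln 2 * real (log_b \<epsilon>) \<le> 6 * real (log_b \<epsilon>)"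
    using ln2_le_25_over_36 by (intro mult_right_mono) auto
  ultimately show "5 * real (log_b \<epsilon>) + 16 \<le> real (k_param \<epsilon>)"
    and "real (k_param \<epsilon>) \<le> 6 * real (log_b \<epsilon>) + 17"
    unfolding k by linarith+
qed

lemma fact_ge_four_power: "9 \<le> n \<Longrightarrow> (4::real) ^ n \<le> fact n"
proof (induction n rule: dec_induct)
  case base then show ?case by (simp add: fact_numeral)
next
  case (step n)
  then have "(4::real) ^ Suc n \<le> real (Suc n) * fact n" unfolding power_Suc by (intro mult_mono) auto
  then show ?case by simp
qed

lemma fact_k_param_ge:
  assumes "0 < \<epsilon>" "\<epsilon> < 1"
  shows "6 * real (b_param \<epsilon>) ^ 2 * 2 ^ k_param \<epsilon> \<le> fact (k_param \<epsilon>)"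
proof -
  define L where "L = log_b \<epsilon>"
  define k where "k = k_param \<epsilon>"
  have "2 * L + 3 \<le> k" "9 \<le> k"
    using k_param_bounds(1)[OF assms] log_b_ge_1[OF assms] unfolding L_def k_def by linarith+
  have "real (b_param \<epsilon>) ^ 2 = 2 ^ (2 * L)" by (simp add: b_param_def L_def power_mult_distrib flip: power_mult)
  then have "6 * real (b_param \<epsilon>) ^ 2 * 2 ^ k \<le> 2 ^ (2 * L + 3) * (2::real) ^ k"
    by (simp add: power_add)
  also have "\<dots> \<le> 2 ^ k * 2 ^ k"
    using \<open>2 * L + 3 \<le> k\<close> by (intro mult_right_mono power_increasing) auto
  also have "\<dots> = 4 ^ k" by (simp flip: power_mult_distrib)
  also have "\<dots> \<le> fact k" using fact_ge_four_power[OF \<open>9 \<le> k\<close>] .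
  finally show ?thesis unfolding k_def .
qed

lemma k_param_le_power:
  assumes "0 < \<epsilon>" "\<epsilon> < 1"
  shows "k_param \<epsilon> \<le> 2 ^ 5 * b_param \<epsilon> ^ 2"
proof -
  have "1 + real (log_b \<epsilon>) * 3 \<le> (1 + 3) ^ log_b \<epsilon>" by (rule Bernoulli_inequality) simp
  then have "real (k_param \<epsilon>) \<le> 2 ^ 5 * 4 ^ log_b \<epsilon>" using k_param_bounds(2)[OF assms] by simp
  also have "(4::real) ^ log_b \<epsilon> = real (b_param \<epsilon> ^ 2)"
    by (simp add: b_param_def power2_eq_square flip: power_mult_distrib)
  finally have "real (k_param \<epsilon>) \<le> real (2 ^ 5 * b_param \<epsilon> ^ 2)" by simp
  then show ?thesis by (rule of_nat_le_iff[THEN iffD1])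
qed

lemma prob_bind_pmf_le:
  assumes "\<And>x. x \<in> set_pmf M \<Longrightarrow> measure_pmf.prob (N x) S \<le> c"
  shows "measure_pmf.prob (bind_pmf M N) S \<le> c"
proof -
  obtain x where "x \<in> set_pmf M" using set_pmf_not_empty[of M] by blast
  then have "0 \<le> c" using assms[of x] measure_nonneg order_trans by blast
  have "emeasure (bind_pmf M N) S = (\<integral>\<^sup>+x. emeasure (N x) S \<partial>M)" by simp
  also have "\<dots> \<le> (\<integral>\<^sup>+x. ennreal c \<partial>M)"
    using assms by (intro nn_integral_mono_AE AE_pmfI) (simp add: measure_pmf.emeasure_eq_measure ennreal_leI)
  also have "\<dots> = ennreal c" by (simp add: measure_pmf.emeasure_space_1)
  finally show ?thesis using \<open>0 \<le> c\<close> by (simp add: measure_pmf.emeasure_eq_measure)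
qed

lemma prob_map_pmf_of_set:
  assumes "finite T" "T \<noteq> {}"
  shows "measure_pmf.prob (map_pmf F (pmf_of_set T)) Y = real (card {t\<in>T. F t \<in> Y}) / real (card T)"
proof -
  have "T \<inter> F -` Y = {t\<in>T. F t \<in> Y}" by auto
  then show ?thesis using assms by (simp add: measure_pmf_of_set)
qed

lemma card_R_set_le_b_param:
  assumes "E1 \<epsilon> A (f, g, h)" "E2 \<epsilon> A (f, g, h)" "0 < \<epsilon>" "\<epsilon> < 1"
  shows "card (R_set \<epsilon> A f) \<le> b_param \<epsilon>"
proof -
  define z where "z = 2 powr (- real (s_val \<epsilon> A f)) * real (card A)"
  have "0 \<le> z" by (simp add: z_def)
  have "\<bar>real (card (R_set \<epsilon> A f)) - z\<bar> \<le> \<epsilon> / 3 * z"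
    using assms(2) unfolding E2_def z_def by (simp add: mult.assoc)
  then have "real (card (R_set \<epsilon> A f)) - z \<le> \<epsilon> / 3 * z" by (rule abs_le_D1)
  then have "real (card (R_set \<epsilon> A f)) \<le> (1 + \<epsilon> / 3) * z" by (simp add: distrib_right)
  also have "\<dots> \<le> 4 / 3 * z" using \<open>0 \<le> z\<close> assms(4) by (intro mult_right_mono) auto
  also have "z \<le> 2 powr (- real_of_int (t_val \<epsilon> A f)) * real (card A)"
    unfolding z_def by (intro mult_right_mono powr_mono) (auto simp: s_val_def)
  also have "\<dots> \<le> 2 powr (-1) * real (b_param \<epsilon>)"
    using assms(1) by (simp add: E1_def)
  also have "4 / 3 * (2 powr (-1) * real (b_param \<epsilon>)) \<le> real (b_param \<epsilon>)"
    by (simp add: powr_minus)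
  finally show ?thesis by simp
qed

lemma p_val_eq_b_param_minus_empty_bins:
  "real (p_val \<epsilon> A (f, g, h)) = real (b_param \<epsilon>) - real (empty_bins (b_param \<epsilon>) h (g ` R_set \<epsilon> A f))"
proof -
  let ?J = "{0..<b_param \<epsilon>}" and ?U = "g ` R_set \<epsilon> A f"
  have "p_val \<epsilon> A (f, g, h) = card {j\<in>?J. \<exists>u\<in>?U. h u = j}"
    unfolding p_val_def R_set_def by (auto intro!: arg_cong[of _ _ card])
  moreover have "{j\<in>?J. \<exists>u\<in>?U. h u = j} \<union> {j\<in>?J. \<forall>u\<in>?U. h u \<noteq> j} = ?J" by auto
  then have "card {j\<in>?J. \<exists>u\<in>?U. h u = j} + empty_bins (b_param \<epsilon>) h ?U = b_param \<epsilon>"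
    unfolding empty_bins_def by (subst card_Un_disjoint[symmetric]) auto
  ultimately show ?thesis by simp
qed

lemma not_E4_iff_empty_bins_deviation:
  "\<not> E4 \<epsilon> A (f, g, h) \<longleftrightarrow> \<epsilon> / 12 * real (card (R_set \<epsilon> A f))
    < \<bar>real (empty_bins (b_param \<epsilon>) h (g ` R_set \<epsilon> A f))
       - real (b_param \<epsilon>) * (1 - 1 / real (b_param \<epsilon>)) ^ card (R_set \<epsilon> A f)\<bar>"
  unfolding E4_def by (simp add: p_val_eq_b_param_minus_empty_bins rho_def abs_minus_commute
      algebra_simps not_le)

lemma prob_empty_bins_deviation_le:
  assumes "0 < \<epsilon>" "\<epsilon> < 1" and irr: "irreducible P" "degree P = d"
    and "log_b \<epsilon> \<le> d" "k_param \<epsilon> \<le> 2 ^ d"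
    and U: "U \<subseteq> {0..<2 ^ d}" "1 \<le> card U" "card U \<le> b_param \<epsilon>" and "0 < \<theta>"
  defines "b \<equiv> b_param \<epsilon>"
  shows "measure_pmf.prob (H_fam P d (k_param \<epsilon>) (log_b \<epsilon>))
      {h. \<theta> < \<bar>real (empty_bins b h U) - real b * (1 - 1 / b) ^ card U\<bar>}
    \<le> 2 * real (card U) ^ 2 / real b / \<theta>\<^sup>2"
proof -
  define \<Omega> where "\<Omega> = gf_tuples d (k_param \<epsilon>)"
  define hash where "hash as x = gf_poly_eval P as x mod 2 ^ log_b \<epsilon>" for as x
  define Dev where "Dev = {h. \<theta> < \<bar>real (empty_bins b h U) - real b * (1 - 1 / b) ^ card U\<bar>}"
  have "finite U" using U(1) finite_subset by blast
  have "k_wise_uniform \<Omega> hash {0..<2 ^ d} b (k_param \<epsilon>)"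
    unfolding \<Omega>_def hash_def b_def b_param_def using assms(5,6)
    by (rule k_wise_uniform_gf_poly_hash[OF irr])
  moreover have "2 \<le> k_param \<epsilon>" using k_param_bounds(1)[OF assms(1,2)] by linarith
  ultimately have bound: "real (card {as\<in>\<Omega>. hash as \<in> Dev}) * \<theta>\<^sup>2
      \<le> real (card \<Omega>) * (2 * real (card U) ^ 2 / real b)"
    using U b_param_ge_2[OF assms(1,2)] fact_k_param_ge[OF assms(1,2)]
    unfolding Dev_def b_def mem_Collect_eq
    by (intro card_empty_bins_deviation_le[OF _ _ \<open>finite U\<close> _ _ _ _ _ _ \<open>0 < \<theta>\<close>])
      (auto simp: \<Omega>_def finite_gf_tuples)
  have "0 < real (card \<Omega>)"
    using finite_gf_tuples gf_tuples_nonempty by (simp add: \<Omega>_def card_gt_0_iff)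
  have "measure_pmf.prob (H_fam P d (k_param \<epsilon>) (log_b \<epsilon>)) Dev
      = real (card {as\<in>\<Omega>. hash as \<in> Dev}) / real (card \<Omega>)"
    unfolding H_fam_def \<Omega>_def hash_def
    by (rule prob_map_pmf_of_set[OF finite_gf_tuples gf_tuples_nonempty])
  also have "\<dots> \<le> 2 * real (card U) ^ 2 / real b / \<theta>\<^sup>2"
    using bound \<open>0 < real (card \<Omega>)\<close> \<open>0 < \<theta>\<close> b_param_ge_2[OF assms(1,2)]
    by (simp add: b_def pos_divide_le_eq pos_le_divide_eq mult_ac)
  finally show ?thesis unfolding Dev_def .
qed

lemma prob_not_E4_le:
  assumes "0 < \<epsilon>" "\<epsilon> < 1" and irr: "irreducible P" "degree P = d"
    and "log_b \<epsilon> \<le> d" "k_param \<epsilon> \<le> 2 ^ d" and "finite A"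
    and inj: "inj_on g (R_set \<epsilon> A f)" and small: "card (R_set \<epsilon> A f) \<le> b_param \<epsilon>"
    and range: "g ` R_set \<epsilon> A f \<subseteq> {0..<2 ^ d}"
  shows "measure_pmf.prob (H_fam P d (k_param \<epsilon>) (log_b \<epsilon>)) {h. \<not> E4 \<epsilon> A (f, g, h)} \<le> 2 powr -6"
proof (cases "R_set \<epsilon> A f = {}")
  case True
  then show ?thesis
    using not_E4_iff_empty_bins_deviation by (simp add: empty_bins_def)
next
  case False
  define b where "b = b_param \<epsilon>"
  define m where "m = card (R_set \<epsilon> A f)"
  have "finite (R_set \<epsilon> A f)" using \<open>finite A\<close> by (simp add: R_set_def)
  then have "1 \<le> m" using False by (simp add: m_def Suc_le_eq card_gt_0_iff)
  then have "measure_pmf.prob (H_fam P d (k_param \<epsilon>) (log_b \<epsilon>)) {h. \<not> E4 \<epsilon> A (f, g, h)}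
      \<le> 2 * real m ^ 2 / real b / (\<epsilon> / 12 * real m)\<^sup>2"
    using prob_empty_bins_deviation_le[OF assms(1-6) range, of "\<epsilon> / 12 * real m"] small assms(1)
    unfolding not_E4_iff_empty_bins_deviation card_image[OF inj] m_def b_def by simp
  also have "\<dots> = 288 / (real b * \<epsilon>\<^sup>2)"
    using \<open>1 \<le> m\<close> assms(1) by (simp add: field_simps power2_eq_square)
  also have "\<dots> \<le> 288 / (9 * 2 ^ 23)"
    using b_param_ge[OF assms(1,2)] assms(1) unfolding b_def
    by (intro divide_left_mono) (auto simp: field_simps)
  also have "\<dots> \<le> 2 powr -6" by (simp add: powr_minus)
  finally show ?thesis .
qed

lemma prob_bad_event_le:
  assumes "0 < \<epsilon>" "\<epsilon> < 1" and irr: "irreducible P" "degree P = d"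
    and "log_b \<epsilon> \<le> d" "k_param \<epsilon> \<le> 2 ^ d" and "finite A" and "\<And>x. g x < 2 ^ d"
  shows "measure_pmf.prob (H_fam P d (k_param \<epsilon>) (log_b \<epsilon>))
           {h. E1 \<epsilon> A (f, g, h) \<and> E2 \<epsilon> A (f, g, h) \<and> E3 \<epsilon> A (f, g, h) \<and> \<not> E4 \<epsilon> A (f, g, h)}
         \<le> 2 powr -6"
proof -
  define good where "good h \<longleftrightarrow> E1 \<epsilon> A (f, g, h) \<and> E2 \<epsilon> A (f, g, h) \<and> E3 \<epsilon> A (f, g, h)" for h
  have good_indep: "good h \<longleftrightarrow> good h'" for h h' by (simp add: good_def E1_def E2_def E3_def)
  show ?thesis
  proof (cases "good (\<lambda>_. 0)")
    case True
    then have "inj_on g (R_set \<epsilon> A f)" by (auto simp: good_def E3_def intro: inj_onI)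
    moreover have "card (R_set \<epsilon> A f) \<le> b_param \<epsilon>"
      using True card_R_set_le_b_param assms(1,2) by (auto simp: good_def)
    ultimately have "measure_pmf.prob (H_fam P d (k_param \<epsilon>) (log_b \<epsilon>)) {h. \<not> E4 \<epsilon> A (f, g, h)} \<le> 2 powr -6"
      using assms by (intro prob_not_E4_le) auto
    moreover have "{h. E1 \<epsilon> A (f, g, h) \<and> E2 \<epsilon> A (f, g, h) \<and> E3 \<epsilon> A (f, g, h) \<and> \<not> E4 \<epsilon> A (f, g, h)}
        = {h. \<not> E4 \<epsilon> A (f, g, h)}"
      using True good_indep[of _ "\<lambda>_. 0"] by (auto simp: good_def)
    ultimately show ?thesis by simp
  next
    case False
    then have "{h. E1 \<epsilon> A (f, g, h) \<and> E2 \<epsilon> A (f, g, h) \<and> E3 \<epsilon> A (f, g, h) \<and> \<not> E4 \<epsilon> A (f, g, h)} = {}"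
      using good_indep[of _ "\<lambda>_. 0"] by (auto simp: good_def)
    then show ?thesis by (simp del: Collect_empty_eq)
  qed
qed

lemma pair_pmf_pair_pmf_eq_bind:
  "pair_pmf A (pair_pmf B C) = bind_pmf A (\<lambda>f. bind_pmf B (\<lambda>g. map_pmf (\<lambda>h. (f, g, h)) C))"
  by (simp add: pair_pmf_def map_pmf_def bind_assoc_pmf bind_return_pmf)

lemma set_pmf_H_fam_less: "g \<in> set_pmf (H_fam P d k c) \<Longrightarrow> g x < 2 ^ c"
  by (auto simp: H_fam_def finite_gf_tuples gf_tuples_nonempty)

theorem lemma12:
  fixes n :: nat and \<epsilon> :: real and A :: "nat set"
    and d1 d2 d3 :: nat and P1 P2 P3 :: "bit poly"
  assumes "n \<ge> 1" and "0 < \<epsilon>" and "\<epsilon> < 1"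
    and "A \<subseteq> {0..<n}" and "A \<noteq> {}"
    \<comment> \<open>field GF(2^d1) for G_2([n])\<close>
    and "irreducible P1" and "degree P1 = d1" and "2 ^ d1 \<ge> n"
    \<comment> \<open>field GF(2^d2) for H_2([n],[2^5 b^2])\<close>
    and "irreducible P2" and "degree P2 = d2" and "2 ^ d2 \<ge> n"
    and "d2 \<ge> 5 + 2 * log_b \<epsilon>"
    \<comment> \<open>field GF(2^d3) for H_k([2^5 b^2],[b])\<close>
    and "irreducible P3" and "degree P3 = d3" and "2 ^ d3 \<ge> 2 ^ 5 * b_param \<epsilon> ^ 2"
    and "d3 \<ge> log_b \<epsilon>"
  shows "measure_pmf.prob
           (pair_pmf (G_fam P1 d1 2)
              (pair_pmf (H_fam P2 d2 2 (5 + 2 * log_b \<epsilon>))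
                        (H_fam P3 d3 (k_param \<epsilon>) (log_b \<epsilon>))))
           {\<psi>. E1 \<epsilon> A \<psi> \<and> E2 \<epsilon> A \<psi> \<and> E3 \<epsilon> A \<psi> \<and> \<not> E4 \<epsilon> A \<psi>}
         \<le> 2 powr (-6)"
proof -
  \<comment> \<open>the bound holds for every fixed \<open>f\<close> and \<open>g\<close>; of the first two families only the range of
    \<open>g\<close> matters\<close>
  have "(2::nat) ^ (5 + 2 * log_b \<epsilon>) \<le> 2 ^ d3"
    using assms(15) by (simp add: b_param_def power_add mult.commute flip: power_mult)
  then have g_range: "g x < 2 ^ d3" if "g \<in> set_pmf (H_fam P2 d2 2 (5 + 2 * log_b \<epsilon>))" for g x
    using set_pmf_H_fam_less[OF that] by (meson order_less_le_trans)
  have "k_param \<epsilon> \<le> 2 ^ d3" using k_param_le_power[OF assms(2,3)] assms(15) by linarith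
  moreover have "finite A" using assms(4) finite_subset by blast
  ultimately show ?thesis
    unfolding pair_pmf_pair_pmf_eq_bind
    by (intro prob_bind_pmf_le) (auto simp: vimage_def g_range assms(2,3,13,14,16)
        intro!: prob_bad_event_le)
qed

end
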